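(* Assume (H1), (H2), (H3). Then for every $\epsilon>0$ there is a finite constant $A=A(\epsilon)$ such that for all $k\ge1$, $$\|\psi_k\|_\infty\le A\,e^{\epsilon\lambda_k}.$$
   Context: Let $q\in C^1([0,\infty))$, $\gamma(y)=2\int_0^yq$, $\mathcal Lu=\frac12u''-qu'$, $\mu(dx)=2e^{-\gamma(x)}dx$ on $[0,\infty)$. (H1): $\int_0^\infty e^{\gamma(y)}\int_y^\infty e^{-\gamma(\xi)}d\xi\,dy<\infty$. (H2): $q(x)\to\infty$ and $q'(x)/q(x)^2\to0$. (H3): there exist $a>0$, $x_0\ge0$ such that $\inf\{q(y):y\ge x\}\ge a\,q(x)$ for all $x\ge x_0$. Known under (H1),(H2): the generator in $L^2(\mu)$ of the diffusion $dX_t=dB_t-q(X_t)dt$ killed at $0$ (minimal closed extension of $\mathcal L$ on compactly supported $C^2$ functions in $(0,\infty)$) has purely discrete spectrum of simple eigenvalues $-\lambda_k$, $0<\lambda_1<\lambda_2<\cdots$, with $L^2(\mu)$-orthonormal eigenfunctions $\psi_k\in C^2$, $\mathcal L\psi_k=-\lambda_k\psi_k$, $\psi_k(0)=0$, each bounded. *)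

theory Defs
  imports "HOL-Analysis.Analysis"
begin

definition gam :: "(real \<Rightarrow> real) \<Rightarrow> real \<Rightarrow> real" where
  "gam q y = 2 * integral {0..y} q"

definition mu :: "(real \<Rightarrow> real) \<Rightarrow> real measure" where
  "mu q = density lborel (\<lambda>x. ennreal (indicator {0..} x * 2 * exp (- gam q x)))"

definition H1 :: "(real \<Rightarrow> real) \<Rightarrow> bool" where
  "H1 q \<longleftrightarrow>
     (\<integral>\<^sup>+ y. ennreal (indicator {0..} y * exp (gam q y)) *
        (\<integral>\<^sup>+ \<xi>. ennreal (indicator {y..} \<xi> * exp (- gam q \<xi>)) \<partial>lborel) \<partial>lborel) < \<infinity>"

text \<open>(H2), with q' the derivative of q\<close>
definition H2 :: "(real \<Rightarrow> real) \<Rightarrow> (real \<Rightarrow> real) \<Rightarrow> bool" where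
  "H2 q q' \<longleftrightarrow> filterlim q at_top at_top \<and>
     ((\<lambda>x. q' x / (q x)\<^sup>2) \<longlongrightarrow> 0) at_top"

definition H3 :: "(real \<Rightarrow> real) \<Rightarrow> bool" where
  "H3 q \<longleftrightarrow> (\<exists>a>0. \<exists>x0\<ge>0. \<forall>x\<ge>x0. Inf (q ` {x..}) \<ge> a * q x)"

end

theory Submission
  imports Defs
begin

text \<open>
  Write \<open>u = \<psi>\<^sub>k\<close> and \<open>\<lambda> = \<lambda>\<^sub>k\<close>, so that \<open>u'' = 2 q u' - 2 \<lambda> u\<close>. Wherever
  \<open>q\<^sup>2 \<ge> 8 \<lambda>\<close>, the quantities \<open>u'\<close> and \<open>q u' - 4 \<lambda> u\<close> cannot become positive together,
  since then \<open>u\<close> would grow linearly; applied to \<open>\<plusminus>u\<close> this gives \<open>|q u'| \<le> 4 \<lambda> |u|\<close>.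
  Hence the energy \<open>H = u\<^sup>2 + u'\<^sup>2 / (2 \<lambda>)\<close>, whose derivative is \<open>2 q u'\<^sup>2 / \<lambda>\<close>, is
  increasing, at most \<open>2 u\<^sup>2\<close>, and satisfies \<open>H' \<le> 32 \<lambda> H / q\<close> to the right of a point \<open>y\<close>
  with \<open>q(y) \<approx> \<surd>(8 \<lambda>) / a\<close>; to the left of \<open>y\<close> only \<open>H' \<ge> -4 Q H\<close> is used, \<open>Q\<close> bounding
  \<open>-q\<close>. By (H1) the integral of \<open>1/q\<close> beyond \<open>y\<close> is small, so Gronwall bounds
  \<open>sup u\<^sup>2\<close> by \<open>2 u(s)\<^sup>2 exp (4 Q y + \<epsilon> \<lambda>)\<close> for every \<open>s \<ge> y\<close>. By (H2) the weight
  \<open>\<gamma>\<close> grows by at most 8 on \<open>[y, y + 2/q(y)]\<close>, so the normalisation \<open>\<integral> u\<^sup>2 d\<mu> = 1\<close>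
  yields such an \<open>s\<close> with \<open>u(s)\<^sup>2 \<le> exp (\<gamma>(y) + 8) q(y) / 4\<close>. Finally (H3) bounds
  \<open>\<gamma>(y)\<close> and \<open>y\<close> by \<open>O(\<surd>\<lambda>)\<close> plus a small multiple of \<open>\<lambda>\<close>, and \<open>C \<surd>\<lambda> \<le> \<epsilon> \<lambda> + C\<^sup>2 / \<epsilon>\<close>.
\<close>

section \<open>Elementary real analysis\<close>

lemma linear_le_quadratic_plus_const:
  fixes X p C :: real
  assumes "0 < X"
  shows "C * p \<le> X * p\<^sup>2 + C\<^sup>2 / (4 * X)"
proof -
  have "0 \<le> X * (p - C / (2 * X))\<^sup>2" using assms by simp
  also have "\<dots> = X * p\<^sup>2 - C * p + C\<^sup>2 / (4 * X)"
    using assms by (simp add: power2_eq_square field_simps)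
  finally show ?thesis by simp
qed

lemma nonneg_derivative_imp_le:
  fixes g g' :: "real \<Rightarrow> real"
  assumes "a \<le> b"
    and deriv: "\<And>x. a \<le> x \<Longrightarrow> x \<le> b \<Longrightarrow> (g has_real_derivative g' x) (at x within {a..b})"
    and nonneg: "\<And>x. a \<le> x \<Longrightarrow> x \<le> b \<Longrightarrow> 0 \<le> g' x"
  shows "g a \<le> g b"
proof -
  have "\<And>x. a \<le> x \<Longrightarrow> x \<le> b \<Longrightarrow> (g has_derivative (*) (g' x)) (at x within {a..b})"
    using deriv by (simp add: has_field_derivative_def mult.commute)
  from mvt_very_simple[OF \<open>a \<le> b\<close> this]
  obtain x where "x \<in> {a..b}" "g b - g a = g' x * (b - a)" by blast
  moreover have "0 \<le> g' x * (b - a)" using nonneg[of x] \<open>a \<le> b\<close> \<open>x \<in> {a..b}\<close> by simp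
  ultimately show ?thesis by simp
qed

lemma pos_at_right_end:
  fixes f :: "real \<Rightarrow> real"
  assumes deriv: "(f has_real_derivative D) (at b within {a..})" and "a < b"
    and pos: "\<forall>z\<in>{a..<b}. 0 < f z" and "0 \<le> f b" and at_zero: "f b = 0 \<Longrightarrow> 0 < D"
  shows "0 < f b"
proof (rule ccontr)
  assume "\<not> 0 < f b"
  with \<open>0 \<le> f b\<close> have "f b = 0" by simp
  have "at b within {a..} = at b" using \<open>a < b\<close> by (intro at_within_interior) auto
  with deriv have "(f has_real_derivative D) (at b)" by simp
  then obtain d where "0 < d" and left: "\<And>h. 0 < h \<Longrightarrow> h < d \<Longrightarrow> f (b - h) < f b"
    using DERIV_pos_inc_left at_zero[OF \<open>f b = 0\<close>] by blast
  define h where "h = min (d / 2) ((b - a) / 2)"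
  have h_le: "h \<le> d / 2" "h \<le> (b - a) / 2"
    unfolding h_def by (rule min.cobounded1, rule min.cobounded2)
  have "0 < h" using \<open>0 < d\<close> \<open>a < b\<close> by (simp add: h_def)
  moreover have "h < d" using h_le \<open>0 < d\<close> by linarith
  moreover have "a \<le> b - h" using h_le(2) \<open>a < b\<close> by (simp add: field_simps)
  ultimately have "f (b - h) < 0" "0 < f (b - h)"
    using left[of h] pos \<open>f b = 0\<close> by auto
  then show False by simp
qed

lemma pos_pair_persists:
  fixes f g :: "real \<Rightarrow> real"
  assumes cf: "continuous_on {a..} f" and cg: "continuous_on {a..} g"
    and "0 < f a" "0 < g a"
    and step: "\<And>b. a < b \<Longrightarrow> (\<forall>z\<in>{a..<b}. 0 < f z \<and> 0 < g z) \<Longrightarrow> 0 \<le> f b \<Longrightarrow> 0 \<le> g b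
               \<Longrightarrow> 0 < f b \<and> 0 < g b"
  shows "\<forall>z\<ge>a. 0 < f z \<and> 0 < g z"
proof (rule ccontr)
  assume neg: "\<not> (\<forall>z\<ge>a. 0 < f z \<and> 0 < g z)"
  define S where "S = ({a..} \<inter> f -` {..0}) \<union> ({a..} \<inter> g -` {..0})"
  have "S \<noteq> {}" using neg unfolding S_def by (auto simp: not_less)
  moreover have bdd: "bdd_below S" unfolding S_def by (rule bdd_belowI[of _ a]) auto
  moreover have "closed S" unfolding S_def
    by (intro closed_Un continuous_closed_preimage cf cg) auto
  ultimately have bS: "Inf S \<in> S" by (rule closed_contains_Inf)
  define b where "b = Inf S"
  have "a < b"
    using bS \<open>0 < f a\<close> \<open>0 < g a\<close> unfolding S_def b_def by (auto simp: le_less)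
  have pos: "\<forall>z\<in>{a..<b}. 0 < f z \<and> 0 < g z"
  proof
    fix z assume z: "z \<in> {a..<b}"
    then have "z \<notin> S" using cInf_lower[OF _ bdd, of z] by (auto simp: b_def)
    with z show "0 < f z \<and> 0 < g z" unfolding S_def by auto
  qed
  have limit_nonneg: "0 \<le> h b"
    if ch: "continuous_on {a..} h" and "\<forall>z\<in>{a..<b}. 0 < h z" for h :: "real \<Rightarrow> real"
  proof -
    have "{a..<b} \<subseteq> {a..b} \<inter> h -` {0..}" using that(2) by auto
    moreover have "closed ({a..b} \<inter> h -` {0..})"
      by (intro continuous_closed_preimage continuous_on_subset[OF ch]) auto
    ultimately have "closure {a..<b} \<subseteq> {a..b} \<inter> h -` {0..}" by (rule closure_minimal)
    with \<open>a < b\<close> show ?thesis by (auto simp: subset_eq)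
  qed
  have "0 < f b \<and> 0 < g b"
    using step[OF \<open>a < b\<close> pos] limit_nonneg[OF cf] limit_nonneg[OF cg] pos by auto
  with bS show False unfolding S_def b_def by auto
qed

lemma convex_ray_unbounded:
  fixes v v' v'' :: "real \<Rightarrow> real"
  assumes d1: "\<And>x. z0 \<le> x \<Longrightarrow> (v has_real_derivative v' x) (at x within {z0..})"
    and d2: "\<And>x. z0 \<le> x \<Longrightarrow> (v' has_real_derivative v'' x) (at x within {z0..})"
    and convex: "\<And>x. z0 \<le> x \<Longrightarrow> 0 \<le> v'' x" and "0 < v' z0"
  shows "\<exists>z\<ge>z0. B < v z"
proof -
  have slope_mono: "v' z0 \<le> v' x" if "z0 \<le> x" for x
    by (rule nonneg_derivative_imp_le[OF that])
       (auto intro: has_field_derivative_subset[OF d2] convex)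
  have grow: "v z0 + v' z0 * (z - z0) \<le> v z" if "z0 \<le> z" for z
  proof -
    have "v z0 - v' z0 * z0 \<le> v z - v' z0 * z"
      by (rule nonneg_derivative_imp_le[OF that, of "\<lambda>s. v s - v' z0 * s" "\<lambda>s. v' s - v' z0"])
         (auto intro!: derivative_eq_intros has_field_derivative_subset[OF d1] simp: slope_mono)
    then show ?thesis by (simp add: algebra_simps)
  qed
  define z where "z = z0 + (\<bar>B\<bar> + \<bar>v z0\<bar> + 1) / v' z0"
  have "z0 \<le> z" "v' z0 * (z - z0) = \<bar>B\<bar> + \<bar>v z0\<bar> + 1"
    using \<open>0 < v' z0\<close> by (auto simp: z_def)
  with grow[of z] show ?thesis by (intro exI[of _ z]) linarith
qed

lemma gronwall_exp_integral:
  fixes H H' c :: "real \<Rightarrow> real"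
  assumes "a \<le> b" and c_cont: "continuous_on {a..b} c"
    and H_deriv: "\<And>x. x \<in> {a..b} \<Longrightarrow> (H has_real_derivative H' x) (at x within {a..b})"
    and H'_le: "\<And>x. x \<in> {a..b} \<Longrightarrow> H' x \<le> c x * H x"
  shows "H b \<le> H a * exp (integral {a..b} c)"
proof -
  define F where "F = (\<lambda>s. integral {a..s} c)"
  have F_deriv: "(F has_real_derivative c x) (at x within {a..b})" if "x \<in> {a..b}" for x
    unfolding F_def has_real_derivative_iff_has_vector_derivative
    by (rule integral_has_vector_derivative[OF c_cont that])
  have "(\<lambda>s. - (H s * exp (- F s))) a \<le> (\<lambda>s. - (H s * exp (- F s))) b"
  proof (rule nonneg_derivative_imp_le[OF \<open>a \<le> b\<close>])
    fix x assume "a \<le> x" "x \<le> b"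
    then show "((\<lambda>s. - (H s * exp (- F s))) has_real_derivative
                 (c x * H x - H' x) * exp (- F x)) (at x within {a..b})"
      by (auto intro!: derivative_eq_intros H_deriv F_deriv simp: algebra_simps)
    show "0 \<le> (c x * H x - H' x) * exp (- F x)"
      using H'_le[of x] \<open>a \<le> x\<close> \<open>x \<le> b\<close> by simp
  qed
  then have "H b * exp (- F b) \<le> H a" by (simp add: F_def)
  then have "H b * exp (- F b) * exp (F b) \<le> H a * exp (F b)" by (simp add: mult_right_mono)
  then show ?thesis by (simp add: F_def mult.assoc flip: exp_add)
qed

lemma gronwall_backward:
  fixes H H' :: "real \<Rightarrow> real" and C :: real
  assumes "a \<le> b"
    and H_deriv: "\<And>x. x \<in> {a..b} \<Longrightarrow> (H has_real_derivative H' x) (at x within {a..b})"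
    and H'_ge: "\<And>x. x \<in> {a..b} \<Longrightarrow> - C * H x \<le> H' x"
  shows "H a \<le> H b * exp (C * (b - a))"
proof -
  have "H a * exp (C * a) \<le> H b * exp (C * b)"
  proof (rule nonneg_derivative_imp_le[OF \<open>a \<le> b\<close>, of "\<lambda>s. H s * exp (C * s)"])
    fix x assume "a \<le> x" "x \<le> b"
    then show "((\<lambda>s. H s * exp (C * s)) has_real_derivative
                 (H' x + C * H x) * exp (C * x)) (at x within {a..b})"
      by (auto intro!: derivative_eq_intros H_deriv simp: algebra_simps)
    show "0 \<le> (H' x + C * H x) * exp (C * x)"
      using H'_ge[of x] \<open>a \<le> x\<close> \<open>x \<le> b\<close> by simp
  qed
  then have "H a * exp (C * a) * exp (- (C * a)) \<le> H b * exp (C * b) * exp (- (C * a))"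
    by (simp add: mult_right_mono)
  then show ?thesis by (simp add: mult.assoc exp_add[symmetric] algebra_simps)
qed

section \<open>Bounded solutions of \<open>u'' = 2 q u' - 2 \<lambda> u\<close>\<close>

text \<open>For \<open>v'' = 2 q v' - 2 \<lambda> v\<close> the quantity \<open>D = q v' - 4 \<lambda> v\<close> satisfies
  \<open>v'' = 3/2 q v' + D/2\<close>, and where \<open>D = 0\<close> also \<open>D' = v' (q' + 3/2 q\<^sup>2 - 4 \<lambda>) > 0\<close>;
  so once \<open>v'\<close> and \<open>D\<close> are positive they stay positive.\<close>
lemma riccati_persists:
  fixes q q' v v' v'' :: "real \<Rightarrow> real" and lam :: real
  assumes qd: "\<And>x. z1 \<le> x \<Longrightarrow> (q has_real_derivative q' x) (at x within {z1..})"
    and vd1: "\<And>x. z1 \<le> x \<Longrightarrow> (v has_real_derivative v' x) (at x within {z1..})"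
    and vd2: "\<And>x. z1 \<le> x \<Longrightarrow> (v' has_real_derivative v'' x) (at x within {z1..})"
    and ode: "\<And>x. z1 \<le> x \<Longrightarrow> v'' x = 2 * q x * v' x - 2 * lam * v x"
    and q_pos: "\<And>x. z1 \<le> x \<Longrightarrow> 0 < q x"
    and q_large: "\<And>x. z1 \<le> x \<Longrightarrow> 8 * lam \<le> (q x)\<^sup>2"
    and q'_lower: "\<And>x. z1 \<le> x \<Longrightarrow> - ((q x)\<^sup>2) \<le> 4 * q' x"
    and start: "0 < v' z1" "4 * lam * v z1 < q z1 * v' z1"
  shows "\<forall>z\<ge>z1. 0 < v' z \<and> 4 * lam * v z < q z * v' z"
proof -
  define D where "D x = q x * v' x - 4 * lam * v x" for x
  have Dd: "(D has_real_derivative q' x * v' x + q x * v'' x - 4 * lam * v' x) (at x within {z1..})"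
    if "z1 \<le> x" for x
    unfolding D_def by (auto intro!: derivative_eq_intros qd vd1 vd2 that)
  have v''_eq: "v'' x = 3/2 * q x * v' x + D x / 2" if "z1 \<le> x" for x
    using ode[OF that] by (simp add: D_def field_simps)
  have v''_nonneg: "0 \<le> v'' x" if "z1 \<le> x" "0 \<le> v' x" "0 \<le> D x" for x
    using v''_eq[of x] q_pos[of x] that by simp
  have "\<forall>z\<ge>z1. 0 < v' z \<and> 0 < D z"
  proof (rule pos_pair_persists[where f = v' and g = D])
    show "continuous_on {z1..} v'" by (rule DERIV_continuous_on[OF vd2]) auto
    show "continuous_on {z1..} D" by (rule DERIV_continuous_on[OF Dd]) auto
    show "0 < v' z1" "0 < D z1" using start by (auto simp: D_def)
  next
    fix b assume "z1 < b" and pos: "\<forall>z\<in>{z1..<b}. 0 < v' z \<and> 0 < D z"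
      and "0 \<le> v' b" "0 \<le> D b"
    have "v' z1 \<le> v' b"
    proof (rule nonneg_derivative_imp_le[where g = v' and g' = v'' and a = z1 and b = b])
      fix x assume x: "z1 \<le> x" "x \<le> b"
      show "(v' has_real_derivative v'' x) (at x within {z1..b})"
        by (rule has_field_derivative_subset[OF vd2]) (use x in auto)
      show "0 \<le> v'' x"
      proof (cases "x = b")
        case True
        with v''_nonneg[of b] \<open>0 \<le> v' b\<close> \<open>0 \<le> D b\<close> x show ?thesis by simp
      next
        case False
        with x pos have "0 < v' x" "0 < D x" by auto
        with v''_nonneg[of x] x show ?thesis by simp
      qed
    qed (use \<open>z1 < b\<close> in simp)
    then have "0 < v' b" using start by simp
    moreover have "0 < D b"
    proof (rule pos_at_right_end[OF Dd[OF less_imp_le[OF \<open>z1 < b\<close>]] \<open>z1 < b\<close> _ \<open>0 \<le> D b\<close>])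
      show "\<forall>z\<in>{z1..<b}. 0 < D z" using pos by blast
      assume "D b = 0"
      then have "q' b * v' b + q b * v'' b - 4 * lam * v' b
                   = v' b * (q' b + 3/2 * (q b)\<^sup>2 - 4 * lam)"
        using v''_eq[of b] \<open>z1 < b\<close> by (simp add: algebra_simps power2_eq_square)
      moreover have "0 < q' b + 3/2 * (q b)\<^sup>2 - 4 * lam"
      proof -
        have "0 < (q b)\<^sup>2" using q_pos[of b] \<open>z1 < b\<close> by simp
        with q_large[of b] q'_lower[of b] \<open>z1 < b\<close> show ?thesis by linarith
      qed
      ultimately show "0 < q' b * v' b + q b * v'' b - 4 * lam * v' b"
        using \<open>0 < v' b\<close> by simp
    qed
    ultimately show "0 < v' b \<and> 0 < D b" ..
  qed
  then show ?thesis by (auto simp: D_def)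
qed

lemma bounded_solution_no_escape:
  fixes q q' v v' v'' :: "real \<Rightarrow> real" and lam y B :: real
  assumes qd: "\<And>x. y \<le> x \<Longrightarrow> (q has_real_derivative q' x) (at x within {y..})"
    and vd1: "\<And>x. y \<le> x \<Longrightarrow> (v has_real_derivative v' x) (at x within {y..})"
    and vd2: "\<And>x. y \<le> x \<Longrightarrow> (v' has_real_derivative v'' x) (at x within {y..})"
    and ode: "\<And>x. y \<le> x \<Longrightarrow> v'' x = 2 * q x * v' x - 2 * lam * v x"
    and bounded: "\<And>x. y \<le> x \<Longrightarrow> v x \<le> B"
    and q_pos: "\<And>x. y \<le> x \<Longrightarrow> 0 < q x"
    and q_large: "\<And>x. y \<le> x \<Longrightarrow> 8 * lam \<le> (q x)\<^sup>2"
    and q'_lower: "\<And>x. y \<le> x \<Longrightarrow> - ((q x)\<^sup>2) \<le> 4 * q' x"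
    and "y \<le> z1" "0 < v' z1"
  shows "q z1 * v' z1 \<le> 4 * lam * v z1"
proof (rule ccontr)
  assume escape: "\<not> q z1 * v' z1 \<le> 4 * lam * v z1"
  have restrict: "(f has_real_derivative f' x) (at x within {z1..})"
    if "\<And>x. y \<le> x \<Longrightarrow> (f has_real_derivative f' x) (at x within {y..})" "z1 \<le> x"
    for f f' :: "real \<Rightarrow> real" and x
    by (rule has_field_derivative_subset[OF that(1)]) (use that(2) \<open>y \<le> z1\<close> in auto)
  note within = restrict[OF qd] restrict[OF vd1] restrict[OF vd2]
  have persist: "\<forall>z\<ge>z1. 0 < v' z \<and> 4 * lam * v z < q z * v' z"
  proof (rule riccati_persists[OF within])
    fix x assume "z1 \<le> x"
    with \<open>y \<le> z1\<close> have "y \<le> x" by simp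
    then show "v'' x = 2 * q x * v' x - 2 * lam * v x" "0 < q x" "8 * lam \<le> (q x)\<^sup>2"
      "- ((q x)\<^sup>2) \<le> 4 * q' x"
      by (fact ode q_pos q_large q'_lower)+
  qed (use \<open>0 < v' z1\<close> escape in auto)
  have "0 \<le> v'' x" if "z1 \<le> x" for x
  proof -
    have "y \<le> x" using that \<open>y \<le> z1\<close> by simp
    then have "v'' x = 3/2 * q x * v' x + (q x * v' x - 4 * lam * v x) / 2"
      using ode[of x] by (simp add: field_simps)
    with persist q_pos[OF \<open>y \<le> x\<close>] that show ?thesis by (simp add: less_imp_le)
  qed
  then obtain z where "z1 \<le> z" "B < v z"
    using convex_ray_unbounded[OF within(2,3)] \<open>0 < v' z1\<close> by blast
  with bounded[of z] \<open>y \<le> z1\<close> show False by simp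
qed

lemma bounded_solution_slope_bound:
  fixes q q' u u' u'' :: "real \<Rightarrow> real" and lam y B :: real
  assumes qd: "\<And>x. y \<le> x \<Longrightarrow> (q has_real_derivative q' x) (at x within {y..})"
    and ud1: "\<And>x. y \<le> x \<Longrightarrow> (u has_real_derivative u' x) (at x within {y..})"
    and ud2: "\<And>x. y \<le> x \<Longrightarrow> (u' has_real_derivative u'' x) (at x within {y..})"
    and ode: "\<And>x. y \<le> x \<Longrightarrow> u'' x = 2 * q x * u' x - 2 * lam * u x"
    and bounded: "\<And>x. y \<le> x \<Longrightarrow> \<bar>u x\<bar> \<le> B"
    and q_pos: "\<And>x. y \<le> x \<Longrightarrow> 0 < q x"
    and q_large: "\<And>x. y \<le> x \<Longrightarrow> 8 * lam \<le> (q x)\<^sup>2"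
    and q'_lower: "\<And>x. y \<le> x \<Longrightarrow> - ((q x)\<^sup>2) \<le> 4 * q' x"
    and "y \<le> s"
  shows "(q s * u' s)\<^sup>2 \<le> (4 * lam * u s)\<^sup>2"
proof -
  have bounded_above: "u x \<le> B" if "y \<le> x" for x
    using bounded[OF that] by (rule abs_le_D1)
  consider "0 < u' s" | "u' s < 0" | "u' s = 0" by linarith
  then show ?thesis
  proof cases
    case 1
    have "q s * u' s \<le> 4 * lam * u s"
      by (rule bounded_solution_no_escape[OF qd ud1 ud2 ode bounded_above q_pos q_large q'_lower
            \<open>y \<le> s\<close> 1])
    moreover have "0 < q s * u' s" using 1 q_pos \<open>y \<le> s\<close> by simp
    ultimately show ?thesis by (intro power_mono) auto
  next
    case 2
    then have "0 < - u' s" by simp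
    have "q s * - u' s \<le> 4 * lam * - u s"
    proof (rule bounded_solution_no_escape[where v = "\<lambda>x. - u x" and v' = "\<lambda>x. - u' x"
        and v'' = "\<lambda>x. - u'' x", OF qd _ _ _ _ q_pos q_large q'_lower \<open>y \<le> s\<close>
        \<open>0 < - u' s\<close>])
      fix x assume "y \<le> x"
      show "((\<lambda>x. - u x) has_real_derivative - u' x) (at x within {y..})"
        using ud1[OF \<open>y \<le> x\<close>] by (rule DERIV_minus)
      show "((\<lambda>x. - u' x) has_real_derivative - u'' x) (at x within {y..})"
        using ud2[OF \<open>y \<le> x\<close>] by (rule DERIV_minus)
      show "- u'' x = 2 * q x * - u' x - 2 * lam * - u x" using ode[OF \<open>y \<le> x\<close>] by simp
      show "- u x \<le> B" using bounded[OF \<open>y \<le> x\<close>] by simp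
    qed
    moreover have "0 < q s * - u' s"
      using \<open>0 < - u' s\<close> q_pos[OF \<open>y \<le> s\<close>] by (simp add: mult_pos_neg)
    ultimately have "(q s * - u' s)\<^sup>2 \<le> (4 * lam * - u s)\<^sup>2" by (intro power_mono) auto
    then show ?thesis by simp
  qed simp
qed

text \<open>\<open>u'' = 2 q u' - 2 \<lambda> u\<close> is the eigenvalue equation \<open>u''/2 - q u' = -\<lambda> u\<close> of the
  generator.\<close>
definition half_line_solution ::
    "(real \<Rightarrow> real) \<Rightarrow> real \<Rightarrow> (real \<Rightarrow> real) \<Rightarrow> (real \<Rightarrow> real) \<Rightarrow> (real \<Rightarrow> real) \<Rightarrow> bool" where
  "half_line_solution q lam u u' u'' \<longleftrightarrow>
     (\<forall>x\<ge>0. (u has_real_derivative u' x) (at x within {0..}) \<and>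
            (u' has_real_derivative u'' x) (at x within {0..}) \<and>
            u'' x = 2 * q x * u' x - 2 * lam * u x)"

lemma half_line_solutionD:
  assumes "half_line_solution q lam u u' u''" "0 \<le> x"
  shows "(u has_real_derivative u' x) (at x within {0..})"
    and "(u' has_real_derivative u'' x) (at x within {0..})"
    and "u'' x = 2 * q x * u' x - 2 * lam * u x"
  using assms unfolding half_line_solution_def by blast+

definition energy :: "real \<Rightarrow> (real \<Rightarrow> real) \<Rightarrow> (real \<Rightarrow> real) \<Rightarrow> real \<Rightarrow> real" where
  "energy lam u u' x = (u x)\<^sup>2 + (u' x)\<^sup>2 / (2 * lam)"

lemma energy_has_derivative:
  assumes sol: "half_line_solution q lam u u' u''" and "lam \<noteq> 0" "0 \<le> a" "x \<in> {a..b}"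
  shows "(energy lam u u' has_real_derivative 2 * q x * (u' x)\<^sup>2 / lam) (at x within {a..b})"
proof -
  have "0 \<le> x" using assms(3,4) by simp
  note d = half_line_solutionD[OF sol this]
  have "(energy lam u u' has_real_derivative 2 * u x * u' x + 2 * u' x * u'' x / (2 * lam))
          (at x within {0..})"
    unfolding energy_def using \<open>lam \<noteq> 0\<close> by (auto intro!: derivative_eq_intros d(1,2))
  moreover have "2 * u x * u' x + 2 * u' x * u'' x / (2 * lam) = 2 * q x * (u' x)\<^sup>2 / lam"
    using \<open>lam \<noteq> 0\<close> by (simp add: d(3) field_simps power2_eq_square)
  ultimately have
    "(energy lam u u' has_real_derivative 2 * q x * (u' x)\<^sup>2 / lam) (at x within {0..})"
    by simp
  then show ?thesis by (rule has_field_derivative_subset) (use \<open>0 \<le> a\<close> in auto)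
qed

lemma energy_mono_right:
  assumes sol: "half_line_solution q lam u u' u''" and "0 < lam" "0 \<le> y" "y \<le> x"
    and q_pos: "\<And>t. y \<le> t \<Longrightarrow> 0 < q t"
  shows "energy lam u u' y \<le> energy lam u u' x"
proof (rule nonneg_derivative_imp_le[OF \<open>y \<le> x\<close>])
  fix t assume "y \<le> t" "t \<le> x"
  then show "(energy lam u u' has_real_derivative 2 * q t * (u' t)\<^sup>2 / lam) (at t within {y..x})"
    using \<open>0 < lam\<close> \<open>0 \<le> y\<close> by (intro energy_has_derivative[OF sol]) auto
  show "0 \<le> 2 * q t * (u' t)\<^sup>2 / lam" using q_pos[OF \<open>y \<le> t\<close>] \<open>0 < lam\<close> by simp
qed

lemma energy_le_twice_sq:
  assumes "0 < lam" "8 * lam \<le> (q x)\<^sup>2" and slope: "(q x * u' x)\<^sup>2 \<le> (4 * lam * u x)\<^sup>2"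
  shows "energy lam u u' x \<le> 2 * (u x)\<^sup>2"
proof -
  have "8 * lam * (u' x)\<^sup>2 \<le> (q x * u' x)\<^sup>2"
    using mult_right_mono[OF assms(2), of "(u' x)\<^sup>2"] by (simp add: power_mult_distrib)
  also have "\<dots> \<le> 16 * lam\<^sup>2 * (u x)\<^sup>2" using slope by (simp add: power_mult_distrib)
  finally have "(u' x)\<^sup>2 / (2 * lam) \<le> (u x)\<^sup>2"
    using \<open>0 < lam\<close> by (simp add: field_simps power2_eq_square)
  then show ?thesis by (simp add: energy_def)
qed

text \<open>The slope bound gives \<open>energy' = 2 q u'\<^sup>2/\<lambda> \<le> 32 \<lambda> energy / q\<close>.\<close>
lemma energy_gronwall_right:
  assumes sol: "half_line_solution q lam u u' u''" and "0 < lam" "0 \<le> y" "y \<le> x"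
    and q_cont: "continuous_on {0..} q" and q_pos: "\<And>t. y \<le> t \<Longrightarrow> 0 < q t"
    and slope: "\<And>t. y \<le> t \<Longrightarrow> (q t * u' t)\<^sup>2 \<le> (4 * lam * u t)\<^sup>2"
  shows "energy lam u u' x \<le> energy lam u u' y * exp (32 * lam * integral {y..x} (\<lambda>t. 1 / q t))"
proof -
  let ?H = "energy lam u u'"
  have "continuous_on {y..x} q" by (rule continuous_on_subset[OF q_cont]) (use \<open>0 \<le> y\<close> in auto)
  moreover have "\<forall>t\<in>{y..x}. q t \<noteq> 0"
  proof
    fix t assume "t \<in> {y..x}"
    then show "q t \<noteq> 0" using q_pos[of t] by simp
  qed
  ultimately have "continuous_on {y..x} (\<lambda>t. 32 * lam * (1 / q t))"
    by (intro continuous_intros)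
  then have "?H x \<le> ?H y * exp (integral {y..x} (\<lambda>t. 32 * lam * (1 / q t)))"
  proof (rule gronwall_exp_integral[OF \<open>y \<le> x\<close>])
    fix t assume t: "t \<in> {y..x}"
    then show "(?H has_real_derivative 2 * q t * (u' t)\<^sup>2 / lam) (at t within {y..x})"
      using \<open>0 < lam\<close> \<open>0 \<le> y\<close> by (intro energy_has_derivative[OF sol]) auto
    have "0 < q t" using q_pos t by simp
    have "(q t * u' t)\<^sup>2 \<le> 16 * lam\<^sup>2 * (u t)\<^sup>2"
      using slope[of t] t by (simp add: power_mult_distrib)
    also have "\<dots> \<le> 16 * lam\<^sup>2 * ?H t"
      using \<open>0 < lam\<close> by (intro mult_left_mono) (auto simp: energy_def)
    finally have slope_H: "(q t * u' t)\<^sup>2 \<le> 16 * lam\<^sup>2 * ?H t" .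
    have "2 * q t * (u' t)\<^sup>2 / lam = 2 * (q t * u' t)\<^sup>2 / (lam * q t)"
      using \<open>0 < q t\<close> by (simp add: power2_eq_square)
    also have "\<dots> \<le> 2 * (16 * lam\<^sup>2 * ?H t) / (lam * q t)"
      using \<open>0 < q t\<close> \<open>0 < lam\<close> by (intro divide_right_mono mult_left_mono slope_H) auto
    also have "\<dots> = 32 * lam * (1 / q t) * ?H t"
      using \<open>0 < q t\<close> \<open>0 < lam\<close> by (simp add: power2_eq_square)
    finally show "2 * q t * (u' t)\<^sup>2 / lam \<le> 32 * lam * (1 / q t) * ?H t" .
  qed
  then show ?thesis by (simp only: integral_mult_right)
qed

lemma energy_gronwall_left:
  assumes sol: "half_line_solution q lam u u' u''" and "0 < lam" "0 \<le> x" "x \<le> y"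
    and "0 \<le> Q" and q_ge: "\<And>t. 0 \<le> t \<Longrightarrow> - Q \<le> q t"
  shows "energy lam u u' x \<le> energy lam u u' y * exp (4 * Q * (y - x))"
proof (rule gronwall_backward[OF \<open>x \<le> y\<close>])
  fix t assume t: "t \<in> {x..y}"
  then show "(energy lam u u' has_real_derivative 2 * q t * (u' t)\<^sup>2 / lam) (at t within {x..y})"
    using \<open>0 < lam\<close> \<open>0 \<le> x\<close> by (intro energy_has_derivative[OF sol]) auto
  have "0 \<le> t" using t \<open>0 \<le> x\<close> by simp
  have "- (4 * Q) * energy lam u u' t \<le> - (4 * Q) * ((u' t)\<^sup>2 / (2 * lam))"
    using \<open>0 \<le> Q\<close> \<open>0 < lam\<close> by (intro mult_left_mono_neg) (auto simp: energy_def)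
  also have "\<dots> = 2 * (- Q) * (u' t)\<^sup>2 / lam" by simp
  also have "\<dots> \<le> 2 * q t * (u' t)\<^sup>2 / lam"
    using q_ge[OF \<open>0 \<le> t\<close>] \<open>0 < lam\<close> by (intro divide_right_mono mult_right_mono) auto
  finally show "- (4 * Q) * energy lam u u' t \<le> 2 * q t * (u' t)\<^sup>2 / lam" .
qed

lemma energy_le_at_level:
  assumes sol: "half_line_solution q lam u u' u''" and "0 < lam" "0 \<le> y" "0 \<le> Q" "0 \<le> z"
    and q_cont: "continuous_on {0..} q"
    and q_ge: "\<And>x. 0 \<le> x \<Longrightarrow> - Q \<le> q x"
    and q_pos: "\<And>x. y \<le> x \<Longrightarrow> 0 < q x"
    and slope: "\<And>x. y \<le> x \<Longrightarrow> (q x * u' x)\<^sup>2 \<le> (4 * lam * u x)\<^sup>2"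
    and tail: "\<And>t. y \<le> t \<Longrightarrow> integral {y..t} (\<lambda>x. 1 / q x) \<le> eta"
  shows "energy lam u u' z \<le> energy lam u u' y * exp (4 * Q * y + 32 * lam * eta)"
    (is "?H z \<le> ?H y * ?E")
proof -
  have "0 \<le> eta" using tail[of y] by simp
  have "0 \<le> ?H y" using \<open>0 < lam\<close> by (simp add: energy_def)
  show ?thesis
  proof (cases "y \<le> z")
    case True
    have "?H z \<le> ?H y * exp (32 * lam * integral {y..z} (\<lambda>t. 1 / q t))"
      by (rule energy_gronwall_right[OF sol \<open>0 < lam\<close> \<open>0 \<le> y\<close> True q_cont q_pos slope])
    also have "\<dots> \<le> ?H y * ?E"
    proof -
      have "32 * lam * integral {y..z} (\<lambda>t. 1 / q t) \<le> 32 * lam * eta"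
        using tail[OF True] \<open>0 < lam\<close> by simp
      also have "\<dots> \<le> 4 * Q * y + 32 * lam * eta" using \<open>0 \<le> Q\<close> \<open>0 \<le> y\<close> by simp
      finally show ?thesis using \<open>0 \<le> ?H y\<close> by (intro mult_left_mono) simp_all
    qed
    finally show ?thesis .
  next
    case False
    then have "?H z \<le> ?H y * exp (4 * Q * (y - z))"
      by (intro energy_gronwall_left[OF sol \<open>0 < lam\<close> \<open>0 \<le> z\<close> _ \<open>0 \<le> Q\<close> q_ge]) simp
    also have "\<dots> \<le> ?H y * ?E"
    proof -
      have "4 * Q * (y - z) \<le> 4 * Q * y" using \<open>0 \<le> Q\<close> \<open>0 \<le> z\<close> by (simp add: right_diff_distrib)
      also have "\<dots> \<le> 4 * Q * y + 32 * lam * eta" using \<open>0 < lam\<close> \<open>0 \<le> eta\<close> by simp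
      finally show ?thesis using \<open>0 \<le> ?H y\<close> by (intro mult_left_mono) simp_all
    qed
    finally show ?thesis .
  qed
qed

lemma bounded_solution_sq_bound:
  fixes q q' u u' u'' :: "real \<Rightarrow> real" and lam y Q eta B s z :: real
  assumes qd: "\<And>x. 0 \<le> x \<Longrightarrow> (q has_real_derivative q' x) (at x within {0..})"
    and sol: "half_line_solution q lam u u' u''"
    and bounded: "\<And>x. 0 \<le> x \<Longrightarrow> \<bar>u x\<bar> \<le> B"
    and "0 < lam" "0 \<le> y" "0 \<le> Q"
    and q_ge: "\<And>x. 0 \<le> x \<Longrightarrow> - Q \<le> q x"
    and q_pos: "\<And>x. y \<le> x \<Longrightarrow> 0 < q x"
    and q_large: "\<And>x. y \<le> x \<Longrightarrow> 8 * lam \<le> (q x)\<^sup>2"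
    and q'_lower: "\<And>x. y \<le> x \<Longrightarrow> - ((q x)\<^sup>2) \<le> 4 * q' x"
    and tail: "\<And>t. y \<le> t \<Longrightarrow> integral {y..t} (\<lambda>x. 1 / q x) \<le> eta"
    and "0 \<le> z" "y \<le> s"
  shows "(u z)\<^sup>2 \<le> 2 * (u s)\<^sup>2 * exp (4 * Q * y + 32 * lam * eta)"
proof -
  let ?H = "energy lam u u'" and ?E = "exp (4 * Q * y + 32 * lam * eta)"
  have within_y: "(f has_real_derivative D) (at x within {y..})"
    if "(f has_real_derivative D) (at x within {0..})" "y \<le> x" for f :: "real \<Rightarrow> real" and D x
    by (rule has_field_derivative_subset[OF that(1)]) (use that(2) \<open>0 \<le> y\<close> in auto)
  have on_y: "(q has_real_derivative q' x) (at x within {y..})"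
    "(u has_real_derivative u' x) (at x within {y..})"
    "(u' has_real_derivative u'' x) (at x within {y..})"
    "u'' x = 2 * q x * u' x - 2 * lam * u x" "\<bar>u x\<bar> \<le> B"
    if "y \<le> x" for x
  proof -
    have "0 \<le> x" using that \<open>0 \<le> y\<close> by simp
    note d = half_line_solutionD[OF sol this]
    show "(q has_real_derivative q' x) (at x within {y..})"
      by (rule within_y[OF qd[OF \<open>0 \<le> x\<close>] that])
    show "(u has_real_derivative u' x) (at x within {y..})" by (rule within_y[OF d(1) that])
    show "(u' has_real_derivative u'' x) (at x within {y..})" by (rule within_y[OF d(2) that])
    show "u'' x = 2 * q x * u' x - 2 * lam * u x" by (rule d(3))
    show "\<bar>u x\<bar> \<le> B" by (rule bounded[OF \<open>0 \<le> x\<close>])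
  qed
  have slope: "(q x * u' x)\<^sup>2 \<le> (4 * lam * u x)\<^sup>2" if "y \<le> x" for x
    by (rule bounded_solution_slope_bound[OF on_y q_pos q_large q'_lower that])
  have q_cont: "continuous_on {0..} q" by (rule DERIV_continuous_on[OF qd]) auto
  have "?H z \<le> ?H y * ?E"
    by (rule energy_le_at_level[OF sol \<open>0 < lam\<close> \<open>0 \<le> y\<close> \<open>0 \<le> Q\<close> \<open>0 \<le> z\<close>
          q_cont q_ge q_pos slope tail])
  also have "\<dots> \<le> 2 * (u s)\<^sup>2 * ?E"
  proof (rule mult_right_mono)
    have "?H y \<le> ?H s" by (rule energy_mono_right[OF sol \<open>0 < lam\<close> \<open>0 \<le> y\<close> \<open>y \<le> s\<close> q_pos])
    also have "\<dots> \<le> 2 * (u s)\<^sup>2"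
      by (rule energy_le_twice_sq[where q = q and u = u and u' = u',
            OF \<open>0 < lam\<close> q_large[OF \<open>y \<le> s\<close>] slope[OF \<open>y \<le> s\<close>]])
    finally show "?H y \<le> 2 * (u s)\<^sup>2" .
  qed simp
  finally have "?H z \<le> 2 * (u s)\<^sup>2 * ?E" .
  moreover have "(u z)\<^sup>2 \<le> ?H z" using \<open>0 < lam\<close> by (simp add: energy_def)
  ultimately show ?thesis by linarith
qed

section \<open>The weight \<open>\<gamma>\<close> and the measure \<open>\<mu>\<close>\<close>

lemma gam_diff:
  assumes "continuous_on {0..} q" "0 \<le> s" "s \<le> t"
  shows "gam q t - gam q s = 2 * integral {s..t} q"
proof -
  have "q integrable_on {0..t}"
    by (rule integrable_continuous_real, rule continuous_on_subset[OF assms(1)]) auto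
  from Henstock_Kurzweil_Integration.integral_combine[OF assms(2,3) this]
  show ?thesis unfolding gam_def by simp
qed

lemma continuous_on_gam:
  assumes q_cont: "continuous_on {0..} q"
  shows "continuous_on {0..} (gam q)"
proof -
  have on_Icc: "continuous_on {-1..real n} (gam q)" for n :: nat
  proof -
    have "continuous_on {-1..0} (gam q)"
    proof (rule continuous_on_eq[OF continuous_on_const[of _ 0]])
      fix x :: real assume "x \<in> {-1..0}"
      then show "0 = gam q x" unfolding gam_def by (cases "x = 0") auto
    qed
    moreover have "q integrable_on {0..real n}"
      by (rule integrable_continuous_real, rule continuous_on_subset[OF q_cont]) auto
    then have "continuous_on {0..real n} (gam q)"
      unfolding gam_def by (intro continuous_intros indefinite_integral_continuous_1)
    ultimately have "continuous_on ({-1..0} \<union> {0..real n}) (gam q)"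
      by (intro continuous_on_closed_Un) auto
    moreover have "{-1..0} \<union> {0..real n} = {-1..real n}" by auto
    ultimately show ?thesis by simp
  qed
  have "continuous_on (\<Union>n. {-1<..<real n}) (gam q)"
  proof (rule continuous_on_open_Union)
    fix S assume "S \<in> range (\<lambda>n. {-1<..<real n})"
    then obtain n where "S = {-1<..<real n}" by blast
    then show "open S" "continuous_on S (gam q)"
      by (auto intro: continuous_on_subset[OF on_Icc[of n]])
  qed
  moreover have "{0..} \<subseteq> (\<Union>n. {-1<..<real n})"
    using reals_Archimedean2 by fastforce
  ultimately show ?thesis by (rule continuous_on_subset)
qed

lemma normalized_interval_mass:
  fixes q u :: "real \<Rightarrow> real"
  assumes q_cont: "continuous_on {0..} q"
    and "(\<lambda>x. (u x)\<^sup>2) \<in> borel_measurable (mu q)" and "integrable (mu q) (\<lambda>x. (u x)\<^sup>2)"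
    and normalized: "(\<integral>x. u x * u x \<partial>mu q) = 1"
    and "0 \<le> y" "0 \<le> h"
    and lower: "\<And>s. y \<le> s \<Longrightarrow> s \<le> y + h \<Longrightarrow> c \<le> 2 * exp (- gam q s) * (u s)\<^sup>2"
  shows "c * h \<le> 1"
proof -
  define g where "g x = indicator {0..} x * 2 * exp (- gam q x)" for x :: real
  have "(\<lambda>x. indicator {0..} x *\<^sub>R (2 * exp (- gam q x))) \<in> borel_measurable borel"
    by (rule borel_measurable_continuous_on_indicator)
       (auto intro!: continuous_intros continuous_on_gam[OF q_cont])
  then have g_meas: "g \<in> borel_measurable lborel" unfolding g_def by (simp add: mult.assoc)
  have mu: "mu q = density lborel (\<lambda>x. ennreal (g x))" unfolding mu_def g_def ..
  have u_meas: "(\<lambda>x. (u x)\<^sup>2) \<in> borel_measurable lborel" using assms(2) by (simp add: mu)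
  have g_nonneg: "AE x in lborel. 0 \<le> g x" by (simp add: g_def)
  have int: "integrable lborel (\<lambda>x. g x *\<^sub>R (u x)\<^sup>2)"
    using assms(3) by (simp add: mu integrable_density[OF u_meas g_meas g_nonneg])
  have "(\<integral>x. g x *\<^sub>R (u x)\<^sup>2 \<partial>lborel) = 1"
    using normalized integral_density[OF u_meas g_meas g_nonneg] by (simp add: mu power2_eq_square)
  moreover have "(\<integral>x. indicator {y..y+h} x *\<^sub>R c \<partial>lborel) \<le> (\<integral>x. g x *\<^sub>R (u x)\<^sup>2 \<partial>lborel)"
  proof (rule integral_mono[OF borel_integrable_compact int])
    fix x :: real
    show "indicator {y..y+h} x *\<^sub>R c \<le> g x *\<^sub>R (u x)\<^sup>2"
      using lower[of x] \<open>0 \<le> y\<close> by (cases "x \<in> {y..y+h}") (auto simp: g_def indicator_def)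
  qed auto
  moreover have "(\<integral>x. indicator {y..y+h} x *\<^sub>R c \<partial>lborel) = c * h"
    using \<open>0 \<le> h\<close> by simp
  ultimately show ?thesis by linarith
qed

lemma integrable_tail_integral_small:
  fixes f :: "real \<Rightarrow> real"
  assumes "integrable lborel f" "\<And>x. 0 \<le> f x" "0 < eta"
  shows "\<exists>Y. \<forall>s t. Y \<le> s \<longrightarrow> s \<le> t \<longrightarrow> integral {s..t} f \<le> eta"
proof -
  define f_tail where "f_tail n x = indicator {real n..} x *\<^sub>R f x" for n :: nat and x :: real
  have tl_meas: "f_tail n \<in> borel_measurable lborel" for n
    unfolding f_tail_def using borel_measurable_integrable[OF assms(1)] by simp
  have tl_lim: "AE x in lborel. (\<lambda>n. f_tail n x) \<longlonglongrightarrow> 0"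
  proof (rule AE_I2)
    fix x :: real
    obtain N :: nat where "x < real N" using reals_Archimedean2 by blast
    then have "\<forall>n\<ge>N. f_tail n x = 0" by (auto simp: f_tail_def)
    then show "(\<lambda>n. f_tail n x) \<longlonglongrightarrow> 0"
      by (intro tendsto_eventually) (auto simp: eventually_sequentially)
  qed
  have tl_dom: "AE x in lborel. norm (f_tail n x) \<le> f x" for n
    using assms(2) by (auto simp: f_tail_def indicator_def)
  have "(\<lambda>n. integral\<^sup>L lborel (f_tail n)) \<longlonglongrightarrow> 0"
    using integral_dominated_convergence[OF _ tl_meas assms(1) tl_lim tl_dom] by simp
  from LIMSEQ_D[OF this \<open>0 < eta\<close>]
  obtain N where "\<forall>n\<ge>N. norm (integral\<^sup>L lborel (f_tail n) - 0) < eta" by blast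
  then have N: "integral\<^sup>L lborel (f_tail N) < eta" by (auto simp: abs_less_iff)
  have tl_int: "integrable lborel (f_tail N)"
    unfolding f_tail_def by (rule integrable_mult_indicator[OF _ assms(1)]) simp
  show ?thesis
  proof (intro exI allI impI)
    fix s t assume "real N \<le> s" "s \<le> t"
    have "set_integrable lborel {s..t} f"
      unfolding set_integrable_def by (rule integrable_mult_indicator[OF _ assms(1)]) simp
    then have "integral {s..t} f = (\<integral>x. indicator {s..t} x *\<^sub>R f x \<partial>lborel)"
      by (simp add: set_borel_integral_eq_integral(2)[symmetric] set_lebesgue_integral_def)
    also have "\<dots> \<le> integral\<^sup>L lborel (f_tail N)"
      using \<open>real N \<le> s\<close> assms(2)
      by (intro integral_mono tl_int integrable_mult_indicator assms(1))
         (auto simp: f_tail_def indicator_def)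
    finally show "integral {s..t} f \<le> eta" using N by simp
  qed
qed

section \<open>Confining drifts\<close>

definition normalized_bounded_solution ::
    "(real \<Rightarrow> real) \<Rightarrow> real \<Rightarrow> (real \<Rightarrow> real) \<Rightarrow> (real \<Rightarrow> real) \<Rightarrow> (real \<Rightarrow> real) \<Rightarrow> bool" where
  "normalized_bounded_solution q lam u u' u'' \<longleftrightarrow>
     half_line_solution q lam u u' u'' \<and> (\<exists>B. \<forall>x\<ge>0. \<bar>u x\<bar> \<le> B) \<and>
     (\<lambda>x. (u x)\<^sup>2) \<in> borel_measurable (mu q) \<and> integrable (mu q) (\<lambda>x. (u x)\<^sup>2) \<and>
     (\<integral>x. u x * u x \<partial>mu q) = 1"

text \<open>What is used of (H1)--(H3): beyond \<open>Y0\<close>, \<open>q \<ge> 1\<close> and \<open>|q'| \<le> q\<^sup>2/4\<close> (from (H2)) and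
  \<open>q\<close> is comparable to its later values with constant \<open>a\<close> (from (H3)); \<open>-Q\<close> bounds \<open>q\<close> below.\<close>
locale confining_drift =
  fixes q q' :: "real \<Rightarrow> real" and a Y0 Q :: real
  assumes q_deriv: "\<And>x. 0 \<le> x \<Longrightarrow> (q has_real_derivative q' x) (at x within {0..})"
    and H1_q: "H1 q"
    and q_at_top: "filterlim q at_top at_top"
    and Y0_nonneg: "0 \<le> Y0"
    and q_ge_1: "\<And>x. Y0 \<le> x \<Longrightarrow> 1 \<le> q x"
    and q'_small: "\<And>x. Y0 \<le> x \<Longrightarrow> \<bar>q' x\<bar> \<le> (q x)\<^sup>2 / 4"
    and a_pos: "0 < a"
    and q_comparable: "\<And>s t. Y0 \<le> s \<Longrightarrow> s \<le> t \<Longrightarrow> a * q s \<le> q t"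
    and Q_nonneg: "0 \<le> Q"
    and q_ge_neg_Q: "\<And>x. 0 \<le> x \<Longrightarrow> - Q \<le> q x"
begin

lemma q_cont: "continuous_on {0..} q"
  by (rule DERIV_continuous_on[OF q_deriv]) auto

text \<open>\<open>1/q + t/4\<close> is nondecreasing, since \<open>(1/q)' = -q'/q\<^sup>2 \<ge> -1/4\<close>.\<close>
lemma q_local_bound:
  assumes "Y0 \<le> x" "x \<le> s" "s \<le> x + 2 / q x"
  shows "q s \<le> 2 * q x"
proof -
  have "inverse (q x) + x / 4 \<le> inverse (q s) + s / 4"
  proof (rule nonneg_derivative_imp_le[where g = "\<lambda>t. inverse (q t) + t / 4"
      and g' = "\<lambda>t. - q' t / (q t)\<^sup>2 + 1 / 4" and a = x and b = s])
    fix t assume t: "x \<le> t" "t \<le> s"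
    then have "1 \<le> q t" using q_ge_1 \<open>Y0 \<le> x\<close> by simp
    have "(q has_real_derivative q' t) (at t within {x..s})"
      by (rule has_field_derivative_subset[OF q_deriv]) (use t \<open>Y0 \<le> x\<close> Y0_nonneg in auto)
    then show "((\<lambda>t. inverse (q t) + t / 4) has_real_derivative - q' t / (q t)\<^sup>2 + 1 / 4)
                 (at t within {x..s})"
      using \<open>1 \<le> q t\<close> by (auto intro!: derivative_eq_intros simp: power2_eq_square field_simps)
    have "q' t \<le> (q t)\<^sup>2 / 4" using q'_small[of t] t \<open>Y0 \<le> x\<close> by simp
    then show "0 \<le> - q' t / (q t)\<^sup>2 + 1 / 4" using \<open>1 \<le> q t\<close> by (simp add: field_simps)
  qed (use assms in simp)
  moreover have "(s - x) / 4 \<le> inverse (q x) / 2"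
    using assms(3) by (simp add: field_simps)
  ultimately have "inverse (2 * q x) \<le> inverse (q s)" by simp
  moreover have "0 < 2 * q x" "0 < q s" using q_ge_1[of x] q_ge_1[of s] assms by auto
  ultimately show ?thesis using inverse_le_iff_le by blast
qed

lemma gam_local_bound:
  assumes "Y0 \<le> x" "x \<le> s" "s \<le> x + 2 / q x"
  shows "gam q s \<le> gam q x + 8"
proof -
  have "1 \<le> q x" using q_ge_1 assms by simp
  have "integral {x..s} q \<le> integral {x..s} (\<lambda>t. 2 * q x)"
  proof (rule integral_le)
    show "q integrable_on {x..s}"
      by (rule integrable_continuous_real, rule continuous_on_subset[OF q_cont])
         (use assms Y0_nonneg in auto)
    show "q t \<le> 2 * q x" if "t \<in> {x..s}" for t
      using q_local_bound[of x t] that assms by simp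
  qed auto
  also have "\<dots> = (s - x) * (2 * q x)" using assms by simp
  also have "\<dots> \<le> 2 / q x * (2 * q x)"
    using assms \<open>1 \<le> q x\<close> by (intro mult_right_mono) auto
  also have "\<dots> = 4" using \<open>1 \<le> q x\<close> by simp
  finally show ?thesis using gam_diff[OF q_cont, of x s] Y0_nonneg assms by simp
qed

text \<open>On \<open>[y, y + 2/q(y)]\<close> the weight \<open>exp (-\<gamma>)\<close> is at least \<open>exp (-\<gamma>(y) - 8)\<close>.\<close>
lemma H1_integrand_lower:
  "ennreal (2 * exp (-8) * (indicator {Y0..} y * (1 / q y)))
     \<le> ennreal (indicator {0..} y * exp (gam q y)) *
        (\<integral>\<^sup>+ \<xi>. ennreal (indicator {y..} \<xi> * exp (- gam q \<xi>)) \<partial>lborel)"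
proof (cases "Y0 \<le> y")
  case True
  define h where "h = 2 / q y"
  have "0 < h" using q_ge_1[OF True] by (simp add: h_def)
  have "ennreal (exp (- (gam q y + 8)) * h)
          = (\<integral>\<^sup>+ \<xi>. ennreal (exp (- (gam q y + 8))) * indicator {y..y+h} \<xi> \<partial>lborel)"
    using \<open>0 < h\<close> by (simp add: nn_integral_cmult_indicator ennreal_mult)
  also have "\<dots> \<le> (\<integral>\<^sup>+ \<xi>. ennreal (indicator {y..} \<xi> * exp (- gam q \<xi>)) \<partial>lborel)"
  proof (rule nn_integral_mono)
    fix \<xi> :: real
    show "ennreal (exp (- (gam q y + 8))) * indicator {y..y+h} \<xi>
            \<le> ennreal (indicator {y..} \<xi> * exp (- gam q \<xi>))"
      using gam_local_bound[OF True, of \<xi>] by (auto simp: h_def indicator_def)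
  qed
  finally have "ennreal (exp (gam q y)) * ennreal (exp (- (gam q y + 8)) * h)
      \<le> ennreal (exp (gam q y)) *
        (\<integral>\<^sup>+ \<xi>. ennreal (indicator {y..} \<xi> * exp (- gam q \<xi>)) \<partial>lborel)"
    by (rule mult_left_mono) simp
  moreover have "exp (gam q y) * (exp (- (gam q y + 8)) * h) = 2 * exp (-8) * (1 / q y)"
    by (simp add: h_def exp_add[symmetric] exp_minus[symmetric])
  ultimately show ?thesis
    using True Y0_nonneg \<open>0 < h\<close> by (simp add: ennreal_mult[symmetric])
qed simp

lemma inv_q_integrable: "integrable lborel (\<lambda>x. indicator {Y0..} x * (1 / q x))"
proof -
  define f where "f x = indicator {Y0..} x * (1 / q x)" for x :: real
  have f_nonneg: "0 \<le> f x" for x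
    unfolding f_def using q_ge_1[of x] by (cases "Y0 \<le> x") auto
  have "\<forall>x\<in>{Y0..}. q x \<noteq> 0" using q_ge_1 by fastforce
  then have "continuous_on {Y0..} (\<lambda>x. 1 / q x)"
    by (intro continuous_intros continuous_on_subset[OF q_cont]) (use Y0_nonneg in auto)
  then have "(\<lambda>x. indicator {Y0..} x *\<^sub>R (1 / q x)) \<in> borel_measurable borel"
    by (rule borel_measurable_continuous_on_indicator[rotated]) simp
  then have f_meas: "f \<in> borel_measurable lborel" unfolding f_def by simp
  have "ennreal (2 * exp (-8)) * (\<integral>\<^sup>+ y. ennreal (f y) \<partial>lborel)
          = (\<integral>\<^sup>+ y. ennreal (2 * exp (-8) * f y) \<partial>lborel)"
    using f_meas f_nonneg by (simp add: nn_integral_cmult[symmetric] ennreal_mult)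
  also have "\<dots> \<le> (\<integral>\<^sup>+ y. ennreal (indicator {0..} y * exp (gam q y)) *
        (\<integral>\<^sup>+ \<xi>. ennreal (indicator {y..} \<xi> * exp (- gam q \<xi>)) \<partial>lborel) \<partial>lborel)"
    unfolding f_def by (intro nn_integral_mono H1_integrand_lower)
  also have "\<dots> < \<infinity>" using H1_q by (simp add: H1_def)
  finally have "(\<integral>\<^sup>+ y. ennreal (f y) \<partial>lborel) < \<infinity>"
    by (auto simp: ennreal_mult_less_top)
  then have "integrable lborel f"
    using f_nonneg by (intro integrableI_bounded[OF f_meas]) simp
  then show ?thesis unfolding f_def .
qed

lemma inv_q_tail:
  assumes "0 < eta"
  obtains Y where "Y0 \<le> Y" "\<And>s t. Y \<le> s \<Longrightarrow> s \<le> t \<Longrightarrow> integral {s..t} (\<lambda>x. 1 / q x) \<le> eta"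
proof -
  obtain Y where Y: "\<And>s t. Y \<le> s \<Longrightarrow> s \<le> t \<Longrightarrow>
      integral {s..t} (\<lambda>x. indicator {Y0..} x * (1 / q x)) \<le> eta"
    using integrable_tail_integral_small[OF inv_q_integrable _ \<open>0 < eta\<close>] q_ge_1
    by (fastforce simp: indicator_def)
  show thesis
  proof (rule that[of "max Y0 Y"])
    fix s t assume "max Y0 Y \<le> s" "s \<le> t"
    then have "integral {s..t} (\<lambda>x. 1 / q x)
                 = integral {s..t} (\<lambda>x. indicator {Y0..} x * (1 / q x))"
      by (intro integral_cong) (auto simp: indicator_def)
    with Y[of s t] \<open>max Y0 Y \<le> s\<close> \<open>s \<le> t\<close> show "integral {s..t} (\<lambda>x. 1 / q x) \<le> eta" by simp
  qed simp
qed

lemma gam_growth: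
  assumes "Y0 \<le> Y1" "Y1 \<le> y"
  shows "gam q y \<le> gam q Y1 + 2 * (y - Y1) * q y / a"
proof -
  have "integral {Y1..y} q \<le> integral {Y1..y} (\<lambda>t. q y / a)"
  proof (rule integral_le)
    show "q integrable_on {Y1..y}"
      by (rule integrable_continuous_real, rule continuous_on_subset[OF q_cont])
         (use assms Y0_nonneg in auto)
    show "q t \<le> q y / a" if "t \<in> {Y1..y}" for t
      using q_comparable[of t y] that assms a_pos by (simp add: field_simps)
  qed auto
  then have "gam q y \<le> gam q Y1 + 2 * ((y - Y1) * q y / a)"
    using gam_diff[OF q_cont, of Y1 y] assms Y0_nonneg by simp
  then show ?thesis by (simp only: mult.assoc times_divide_eq_right)
qed

lemma distance_le_tail:
  assumes "Y0 \<le> Y1" "Y1 \<le> y" and tail: "integral {Y1..y} (\<lambda>x. 1 / q x) \<le> eta"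
  shows "y - Y1 \<le> eta * q y / a"
proof -
  have "1 \<le> q y" using q_ge_1[of y] assms by simp
  then have "0 < q y" by simp
  have "integral {Y1..y} (\<lambda>t. a / q y) \<le> integral {Y1..y} (\<lambda>x. 1 / q x)"
  proof (rule integral_le)
    have "\<forall>x\<in>{Y1..y}. q x \<noteq> 0"
    proof
      fix x assume "x \<in> {Y1..y}"
      then have "1 \<le> q x" using q_ge_1[of x] assms by simp
      then show "q x \<noteq> 0" by simp
    qed
    then show "(\<lambda>x. 1 / q x) integrable_on {Y1..y}"
      by (intro integrable_continuous_real continuous_intros continuous_on_subset[OF q_cont])
         (use assms Y0_nonneg in auto)
    show "a / q y \<le> 1 / q t" if "t \<in> {Y1..y}" for t
      using q_comparable[of t y] q_ge_1[of t] that assms \<open>0 < q y\<close>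
      by (simp add: field_simps)
  qed auto
  with tail have "(y - Y1) * (a / q y) \<le> eta" using assms by simp
  with \<open>0 < q y\<close> a_pos show ?thesis by (simp add: field_simps)
qed

lemma gam_growth_tail:
  assumes "Y0 \<le> Y1" "Y1 \<le> y" and tail: "integral {Y1..y} (\<lambda>x. 1 / q x) \<le> eta"
  shows "gam q y \<le> gam q Y1 + 2 * eta * (q y)\<^sup>2 / a\<^sup>2"
proof -
  have "0 \<le> q y" using q_ge_1[of y] assms by simp
  have "gam q y \<le> gam q Y1 + 2 * (y - Y1) * q y / a" by (rule gam_growth[OF assms(1,2)])
  also have "2 * (y - Y1) * q y / a \<le> 2 * (eta * q y / a) * q y / a"
    using distance_le_tail[OF assms] \<open>0 \<le> q y\<close> a_pos
    by (intro divide_right_mono mult_right_mono) auto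
  also have "\<dots> = 2 * eta * (q y)\<^sup>2 / a\<^sup>2" by (simp add: power2_eq_square)
  finally show ?thesis by simp
qed

lemma level_point:
  assumes "0 \<le> Y1"
  obtains y where "Y1 \<le> y" "p \<le> q y" "y = Y1 \<or> q y = p"
proof (cases "p \<le> q Y1")
  case False
  obtain N where N: "\<And>x. N \<le> x \<Longrightarrow> p \<le> q x"
    using q_at_top by (auto simp: filterlim_at_top eventually_at_top_linorder)
  have "\<exists>y. Y1 \<le> y \<and> y \<le> max N Y1 \<and> q y = p"
    using False N[of "max N Y1"] assms
    by (intro IVT') (auto intro: continuous_on_subset[OF q_cont])
  with that show thesis by force
qed (use that in auto)

text \<open>Where \<open>\<gamma>\<close> varies by at most 8, the normalisation \<open>\<integral> u\<^sup>2 d\<mu> = 1\<close> forces \<open>u\<^sup>2\<close> to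
  be small somewhere in \<open>[y, y + 2/q(y)]\<close>.\<close>
lemma level_mass_bound:
  fixes u :: "real \<Rightarrow> real" and c y :: real
  assumes meas: "(\<lambda>x. (u x)\<^sup>2) \<in> borel_measurable (mu q)" and int: "integrable (mu q) (\<lambda>x. (u x)\<^sup>2)"
    and normalized: "(\<integral>x. u x * u x \<partial>mu q) = 1" and "Y0 \<le> y"
    and lower: "\<And>s. y \<le> s \<Longrightarrow> c \<le> 2 * (u s)\<^sup>2"
  shows "c \<le> exp (gam q y + 8) * q y / 2"
proof -
  have "0 \<le> y" using Y0_nonneg \<open>Y0 \<le> y\<close> by simp
  have "1 \<le> q y" using q_ge_1 \<open>Y0 \<le> y\<close> by simp
  define d where "d = 2 / q y"
  define G where "G = exp (gam q y + 8)"
  have "exp (- (gam q y + 8)) = 1 / G" by (simp only: G_def exp_minus inverse_eq_divide)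
  moreover have "c * exp (- (gam q y + 8)) * d \<le> 1"
  proof (rule normalized_interval_mass[OF q_cont meas int normalized \<open>0 \<le> y\<close>])
    show "0 \<le> d" using \<open>1 \<le> q y\<close> by (simp add: d_def)
    fix s assume "y \<le> s" "s \<le> y + d"
    then have "gam q s \<le> gam q y + 8"
      using gam_local_bound[OF \<open>Y0 \<le> y\<close>] by (simp add: d_def)
    then have "exp (- (gam q y + 8)) \<le> exp (- gam q s)" by simp
    with lower[OF \<open>y \<le> s\<close>] have "c * exp (- (gam q y + 8)) \<le> 2 * (u s)\<^sup>2 * exp (- gam q s)"
      by (rule mult_mono) auto
    then show "c * exp (- (gam q y + 8)) \<le> 2 * exp (- gam q s) * (u s)\<^sup>2"
      by (simp only: ac_simps)
  qed
  ultimately have "c * (1 / G) * d \<le> 1" by (simp only:)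
  then show ?thesis using \<open>1 \<le> q y\<close> by (simp add: G_def d_def field_simps)
qed

lemma normalized_solution_sq_bound:
  fixes u u' u'' :: "real \<Rightarrow> real" and lam y eta z :: real
  assumes sol: "normalized_bounded_solution q lam u u' u''"
    and "0 < lam" "Y0 \<le> y" and level: "8 * lam \<le> (a * q y)\<^sup>2"
    and tail: "\<And>t. y \<le> t \<Longrightarrow> integral {y..t} (\<lambda>x. 1 / q x) \<le> eta"
    and "0 \<le> z"
  shows "(u z)\<^sup>2 \<le> exp (gam q y + 8 + q y + 4 * Q * y + 32 * lam * eta)"
proof -
  obtain B where bounded: "\<And>x. 0 \<le> x \<Longrightarrow> \<bar>u x\<bar> \<le> B"
    using sol by (auto simp: normalized_bounded_solution_def)
  have ode: "half_line_solution q lam u u' u''"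
    and meas: "(\<lambda>x. (u x)\<^sup>2) \<in> borel_measurable (mu q)"
    and int: "integrable (mu q) (\<lambda>x. (u x)\<^sup>2)"
    and normalized: "(\<integral>x. u x * u x \<partial>mu q) = 1"
    using sol unfolding normalized_bounded_solution_def by blast+
  define E where "E = exp (4 * Q * y + 32 * lam * eta)"
  have "0 < E" by (simp add: E_def)
  have "0 \<le> y" using Y0_nonneg \<open>Y0 \<le> y\<close> by simp
  have "1 \<le> q y" using q_ge_1 \<open>Y0 \<le> y\<close> by simp
  have q_pos: "0 < q x" if "y \<le> x" for x
    using q_ge_1[of x] that \<open>Y0 \<le> y\<close> by simp
  have q'_lower: "- ((q x)\<^sup>2) \<le> 4 * q' x" if "y \<le> x" for x
    using q'_small[of x] that \<open>Y0 \<le> y\<close> by (simp add: abs_le_iff)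
  have q_large: "8 * lam \<le> (q x)\<^sup>2" if "y \<le> x" for x
  proof -
    have "(a * q y)\<^sup>2 \<le> (q x)\<^sup>2"
      using a_pos \<open>1 \<le> q y\<close> q_comparable[OF \<open>Y0 \<le> y\<close> that] by (intro power_mono) auto
    with level show ?thesis by simp
  qed
  have sq_le: "(u z)\<^sup>2 / E \<le> 2 * (u s)\<^sup>2" if "y \<le> s" for s
    using bounded_solution_sq_bound[OF q_deriv ode bounded \<open>0 < lam\<close> \<open>0 \<le> y\<close>
        Q_nonneg q_ge_neg_Q q_pos q_large q'_lower tail \<open>0 \<le> z\<close> that] \<open>0 < E\<close>
    by (simp add: E_def divide_le_eq)
  have "(u z)\<^sup>2 / E \<le> exp (gam q y + 8) * q y / 2"
    by (rule level_mass_bound[OF meas int normalized \<open>Y0 \<le> y\<close> sq_le])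
  then have "(u z)\<^sup>2 \<le> E * exp (gam q y + 8) * (q y / 2)"
    using \<open>0 < E\<close> by (simp add: divide_le_eq ac_simps)
  also have "\<dots> \<le> E * exp (gam q y + 8) * exp (q y)"
  proof (rule mult_left_mono)
    show "q y / 2 \<le> exp (q y)" using exp_ge_add_one_self[of "q y"] \<open>1 \<le> q y\<close> by linarith
  qed (use \<open>0 < E\<close> in simp)
  also have "\<dots> = exp (gam q y + 8 + q y + 4 * Q * y + 32 * lam * eta)"
    by (simp add: E_def mult_exp_exp ac_simps)
  finally show ?thesis .
qed

text \<open>At the level point \<open>q(y) = \<surd>(8\<lambda>)/a\<close> the exponent is \<open>O(\<surd>\<lambda>) + O(\<eta>\<lambda>)\<close>; the
  \<open>\<surd>\<lambda>\<close> part is absorbed by \<open>\<epsilon>\<lambda>\<close> at the price of a constant.\<close>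
lemma level_exponent_bound:
  assumes "0 < eps" "0 < lam" "0 < eta" "eta \<le> 1" "(16 / a ^ 4 + 32) * eta \<le> eps"
    and "Y0 \<le> Y1" "Y1 \<le> y"
    and tail: "integral {Y1..y} (\<lambda>x. 1 / q x) \<le> eta"
    and level: "y = Y1 \<or> (a * q y)\<^sup>2 = 8 * lam"
  shows "gam q y + 8 + q y + 4 * Q * y + 32 * lam * eta
           \<le> gam q Y1 + 8 + 4 * Q * Y1 + q Y1 + 2 * (1 + 4 * Q / a)\<^sup>2 / (eps * a\<^sup>2) + 2 * eps * lam"
proof -
  have "32 * eta \<le> (16 / a ^ 4 + 32) * eta"
    using \<open>0 < eta\<close> a_pos by (simp add: distrib_right)
  then have "32 * lam * eta \<le> eps * lam"
    using assms(5) \<open>0 < lam\<close> by (simp add: mult.commute mult_right_mono)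
  have "0 \<le> 2 * (1 + 4 * Q / a)\<^sup>2 / (eps * a\<^sup>2)" "0 \<le> eps * lam" "0 \<le> q Y1"
    using \<open>0 < eps\<close> \<open>0 < lam\<close> q_ge_1[OF \<open>Y0 \<le> Y1\<close>] by auto
  note nonneg = this
  from level show ?thesis
  proof
    assume "y = Y1"
    show ?thesis
      unfolding \<open>y = Y1\<close> using \<open>32 * lam * eta \<le> eps * lam\<close> nonneg by linarith
  next
    assume level_eq: "(a * q y)\<^sup>2 = 8 * lam"
    define P where "P = q y"
    have "0 \<le> P" using q_ge_1[of y] assms(6,7) by (simp add: P_def)
    have P_sq: "P\<^sup>2 = 8 * lam / a\<^sup>2" using level_eq a_pos by (simp add: P_def field_simps)
    have gap: "y - Y1 \<le> eta * P / a" using distance_le_tail[OF assms(6,7) tail] by (simp add: P_def)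
    have "2 * eta * P\<^sup>2 / a\<^sup>2 = 16 * eta * lam / a ^ 4"
      unfolding P_sq using a_pos by (simp add: power2_eq_square power4_eq_xxxx)
    with gam_growth_tail[OF assms(6,7) tail]
    have gam_y: "gam q y \<le> gam q Y1 + 16 * eta * lam / a ^ 4" by (simp add: P_def)
    have "4 * Q * (y - Y1) \<le> 4 * Q * (eta * P / a)"
      using gap Q_nonneg by (intro mult_left_mono) auto
    also have "\<dots> = 4 * Q / a * P * eta" by simp
    also have "\<dots> \<le> 4 * Q / a * P"
      using \<open>eta \<le> 1\<close> \<open>0 < eta\<close> \<open>0 \<le> P\<close> Q_nonneg a_pos by (intro mult_right_le_one_le) auto
    finally have Q_y: "4 * Q * y \<le> 4 * Q * Y1 + 4 * Q / a * P" by (simp add: algebra_simps)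
    have "(1 + 4 * Q / a) * P \<le> eps * a\<^sup>2 / 8 * P\<^sup>2 + (1 + 4 * Q / a)\<^sup>2 / (4 * (eps * a\<^sup>2 / 8))"
      using \<open>0 < eps\<close> a_pos by (intro linear_le_quadratic_plus_const) simp
    also have "\<dots> = eps * lam + 2 * (1 + 4 * Q / a)\<^sup>2 / (eps * a\<^sup>2)"
      using a_pos by (simp add: P_sq field_simps)
    finally have amgm: "P + 4 * Q / a * P \<le> eps * lam + 2 * (1 + 4 * Q / a)\<^sup>2 / (eps * a\<^sup>2)"
      by (simp add: algebra_simps)
    have "16 * eta * lam / a ^ 4 + 32 * lam * eta = ((16 / a ^ 4 + 32) * eta) * lam"
      by (simp add: algebra_simps)
    also have "\<dots> \<le> eps * lam"
      using assms(5) \<open>0 < lam\<close> by (intro mult_right_mono) auto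
    finally have eta_terms: "16 * eta * lam / a ^ 4 + 32 * lam * eta \<le> eps * lam" .
    from gam_y Q_y amgm eta_terms nonneg show ?thesis unfolding P_def by linarith
  qed
qed

lemma uniform_solution_bound:
  assumes "0 < eps"
  shows "\<exists>A. \<forall>lam u u' u''. 0 < lam \<longrightarrow> normalized_bounded_solution q lam u u' u'' \<longrightarrow>
           (\<forall>z\<ge>0. \<bar>u z\<bar> \<le> A * exp (eps * lam))"
proof -
  define D where "D = 16 / a ^ 4 + 32"
  define eta where "eta = min 1 (eps / D)"
  have "0 < D" using a_pos by (simp add: D_def add_pos_pos)
  have "eta \<le> eps / D" by (simp add: eta_def)
  then have "D * eta \<le> eps" using \<open>0 < D\<close> by (simp add: le_divide_eq mult.commute)
  moreover have "0 < eta" "eta \<le> 1" using \<open>0 < eps\<close> \<open>0 < D\<close> by (simp_all add: eta_def)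
  ultimately have eta: "0 < eta" "eta \<le> 1" "(16 / a ^ 4 + 32) * eta \<le> eps"
    by (simp_all add: D_def)
  obtain Y1 where "Y0 \<le> Y1"
    and tail: "\<And>s t. Y1 \<le> s \<Longrightarrow> s \<le> t \<Longrightarrow> integral {s..t} (\<lambda>x. 1 / q x) \<le> eta"
    using inv_q_tail[OF \<open>0 < eta\<close>] by blast
  have "0 \<le> Y1" using Y0_nonneg \<open>Y0 \<le> Y1\<close> by simp
  define K where "K = gam q Y1 + 8 + 4 * Q * Y1 + q Y1 + 2 * (1 + 4 * Q / a)\<^sup>2 / (eps * a\<^sup>2)"
  show ?thesis
  proof (intro exI allI impI)
    fix lam z :: real and u u' u'' :: "real \<Rightarrow> real"
    assume "0 < lam" and solution: "normalized_bounded_solution q lam u u' u''" and "0 \<le> z"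
    obtain y where "Y1 \<le> y" and y: "sqrt (8 * lam) / a \<le> q y" "y = Y1 \<or> q y = sqrt (8 * lam) / a"
      using level_point[OF \<open>0 \<le> Y1\<close>] by blast
    have "sqrt (8 * lam) \<le> a * q y" using y(1) a_pos by (simp add: field_simps)
    then have level: "8 * lam \<le> (a * q y)\<^sup>2" by (rule sqrt_le_D)
    have level_eq: "y = Y1 \<or> (a * q y)\<^sup>2 = 8 * lam" using y(2) a_pos \<open>0 < lam\<close> by auto
    have "Y0 \<le> y" using \<open>Y0 \<le> Y1\<close> \<open>Y1 \<le> y\<close> by simp
    have tail_y: "integral {y..t} (\<lambda>x. 1 / q x) \<le> eta" if "y \<le> t" for t
      using tail[OF \<open>Y1 \<le> y\<close> that] .
    have "(u z)\<^sup>2 \<le> exp (gam q y + 8 + q y + 4 * Q * y + 32 * lam * eta)"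
      by (rule normalized_solution_sq_bound[OF solution \<open>0 < lam\<close> \<open>Y0 \<le> y\<close> level tail_y \<open>0 \<le> z\<close>])
    also have "\<dots> \<le> exp (K + 2 * eps * lam)"
      using level_exponent_bound[OF \<open>0 < eps\<close> \<open>0 < lam\<close> eta \<open>Y0 \<le> Y1\<close> \<open>Y1 \<le> y\<close>
          tail[OF order_refl \<open>Y1 \<le> y\<close>] level_eq]
      by (simp add: K_def)
    also have "\<dots> = (exp (K / 2) * exp (eps * lam))\<^sup>2"
    proof -
      have "K + 2 * eps * lam = (K / 2 + eps * lam) + (K / 2 + eps * lam)" by simp
      then show ?thesis by (simp only: exp_add power2_eq_square ac_simps)
    qed
    finally have "\<bar>u z\<bar>\<^sup>2 \<le> (exp (K / 2) * exp (eps * lam))\<^sup>2" by simp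
    then show "\<bar>u z\<bar> \<le> exp (K / 2) * exp (eps * lam)"
      by (rule power2_le_imp_le) simp
  qed
qed

end

lemma confining_drift_exists:
  fixes q q' :: "real \<Rightarrow> real"
  assumes q_deriv: "\<And>x. 0 \<le> x \<Longrightarrow> (q has_real_derivative q' x) (at x within {0..})"
    and "H1 q" "H2 q q'" "H3 q"
  obtains a Y0 Q where "confining_drift q q' a Y0 Q"
proof -
  have q_cont: "continuous_on {0..} q" by (rule DERIV_continuous_on[OF q_deriv]) auto
  have q_at_top: "filterlim q at_top at_top" and q'_lim: "((\<lambda>x. q' x / (q x)\<^sup>2) \<longlongrightarrow> 0) at_top"
    using \<open>H2 q q'\<close> by (auto simp: H2_def)
  have "\<forall>\<^sub>F x in at_top. 1 \<le> q x" using q_at_top by (simp add: filterlim_at_top)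
  moreover have "\<forall>\<^sub>F x in at_top. dist (q' x / (q x)\<^sup>2) 0 < 1 / 4"
    by (rule tendstoD[OF q'_lim]) simp
  then have "\<forall>\<^sub>F x in at_top. \<bar>q' x / (q x)\<^sup>2\<bar> < 1 / 4" by (simp add: dist_real_def)
  ultimately have "\<forall>\<^sub>F x in at_top. 1 \<le> q x \<and> \<bar>q' x / (q x)\<^sup>2\<bar> < 1 / 4"
    by (rule eventually_conj)
  then obtain N where N: "\<And>x. N \<le> x \<Longrightarrow> 1 \<le> q x \<and> \<bar>q' x / (q x)\<^sup>2\<bar> < 1 / 4"
    by (auto simp: eventually_at_top_linorder)
  obtain a x0 where "0 < a" "0 \<le> x0" and H3_inf: "\<And>x. x0 \<le> x \<Longrightarrow> a * q x \<le> Inf (q ` {x..})"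
    using \<open>H3 q\<close> unfolding H3_def by blast
  define Y0 where "Y0 = max N x0"
  have "0 \<le> Y0" using \<open>0 \<le> x0\<close> by (simp add: Y0_def)
  have q_ge_1: "1 \<le> q x" if "Y0 \<le> x" for x using N[of x] that by (simp add: Y0_def)
  obtain xm where xm: "\<And>x. x \<in> {0..Y0} \<Longrightarrow> q xm \<le> q x"
    using continuous_attains_inf[OF compact_Icc _ continuous_on_subset[OF q_cont], of 0 Y0]
      \<open>0 \<le> Y0\<close> by fastforce
  show thesis
  proof (rule that[of a Y0 "\<bar>q xm\<bar>"], unfold_locales)
    show "\<bar>q' x\<bar> \<le> (q x)\<^sup>2 / 4" if "Y0 \<le> x" for x
    proof -
      have "0 < (q x)\<^sup>2" using q_ge_1[OF that] by simp
      moreover have "\<bar>q' x\<bar> / (q x)\<^sup>2 < 1 / 4" using N[of x] that by (simp add: Y0_def abs_divide)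
      ultimately show ?thesis by (simp add: divide_less_eq)
    qed
    show "a * q s \<le> q t" if "Y0 \<le> s" "s \<le> t" for s t
    proof -
      have "0 \<le> q x" if "x \<in> {s..}" for x
        using q_ge_1[of x] that \<open>Y0 \<le> s\<close> by simp
      then have "bdd_below (q ` {s..})" by (rule bdd_belowI2)
      then have "Inf (q ` {s..}) \<le> q t" using that by (intro cInf_lower) auto
      with H3_inf[of s] that show ?thesis by (simp add: Y0_def)
    qed
    show "- \<bar>q xm\<bar> \<le> q x" if "0 \<le> x" for x
      using xm[of x] q_ge_1[of x] that by (cases "x \<le> Y0") auto
  qed (use q_deriv \<open>H1 q\<close> q_at_top \<open>0 < a\<close> \<open>0 \<le> Y0\<close> q_ge_1 in auto)
qed

theorem propositionC3:
  fixes q q' :: "real \<Rightarrow> real"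
    and lam :: "nat \<Rightarrow> real"
    and psi psi' psi'' :: "nat \<Rightarrow> real \<Rightarrow> real"
  assumes q_deriv: "\<And>x. x \<ge> 0 \<Longrightarrow> (q has_real_derivative q' x) (at x within {0..})"
    and q'_cont: "continuous_on {0..} q'"
    and h1: "H1 q" and h2: "H2 q q'" and h3: "H3 q"
    and lam_pos: "0 < lam 1"
    and lam_mono: "\<And>j k. 1 \<le> j \<Longrightarrow> j < k \<Longrightarrow> lam j < lam k"
    and psi_d1: "\<And>k x. k \<ge> 1 \<Longrightarrow> x \<ge> 0 \<Longrightarrow>
                   (psi k has_real_derivative psi' k x) (at x within {0..})"
    and psi_d2: "\<And>k x. k \<ge> 1 \<Longrightarrow> x \<ge> 0 \<Longrightarrow>
                   (psi' k has_real_derivative psi'' k x) (at x within {0..})"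
    and psi_cont2: "\<And>k. k \<ge> 1 \<Longrightarrow> continuous_on {0..} (psi'' k)"
    and psi_eq: "\<And>k x. k \<ge> 1 \<Longrightarrow> x \<ge> 0 \<Longrightarrow>
                   psi'' k x / 2 - q x * psi' k x = - lam k * psi k x"
    and psi_zero: "\<And>k. k \<ge> 1 \<Longrightarrow> psi k 0 = 0"
    and psi_L2: "\<And>k. k \<ge> 1 \<Longrightarrow> (\<lambda>x. (psi k x)\<^sup>2) \<in> borel_measurable (mu q) \<and>
                   integrable (mu q) (\<lambda>x. (psi k x)\<^sup>2)"
    and psi_orth: "\<And>j k. 1 \<le> j \<Longrightarrow> 1 \<le> k \<Longrightarrow>
                   (\<integral>x. psi j x * psi k x \<partial>(mu q)) = (if j = k then 1 else 0)"
    and psi_bdd: "\<And>k. k \<ge> 1 \<Longrightarrow> \<exists>B. \<forall>x\<ge>0. \<bar>psi k x\<bar> \<le> B"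
  shows "\<forall>\<epsilon>>0. \<exists>A::real. \<forall>k\<ge>1. \<forall>x\<ge>0. \<bar>psi k x\<bar> \<le> A * exp (\<epsilon> * lam k)"
proof (intro allI impI)
  fix eps :: real assume "0 < eps"
  obtain a Y0 Q where "confining_drift q q' a Y0 Q"
    using confining_drift_exists[OF q_deriv h1 h2 h3] .
  then interpret confining_drift q q' a Y0 Q .
  obtain A where A: "\<And>lam u u' u'' z. 0 < lam \<Longrightarrow> normalized_bounded_solution q lam u u' u'' \<Longrightarrow>
      0 \<le> z \<Longrightarrow> \<bar>u z\<bar> \<le> A * exp (eps * lam)"
    using uniform_solution_bound[OF \<open>0 < eps\<close>] by blast
  have "0 < lam k" if "1 \<le> k" for k
    using lam_pos lam_mono[of 1 k] that by (cases "k = 1") auto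
  moreover have "normalized_bounded_solution q (lam k) (psi k) (psi' k) (psi'' k)"
    if k: "1 \<le> k" for k
    unfolding normalized_bounded_solution_def half_line_solution_def
  proof (intro conjI allI impI)
    fix x :: real assume "0 \<le> x"
    show "(psi k has_real_derivative psi' k x) (at x within {0..})"
      "(psi' k has_real_derivative psi'' k x) (at x within {0..})"
      using psi_d1[OF k \<open>0 \<le> x\<close>] psi_d2[OF k \<open>0 \<le> x\<close>] .
    show "psi'' k x = 2 * q x * psi' k x - 2 * lam k * psi k x"
      using psi_eq[OF k \<open>0 \<le> x\<close>] by simp
  qed (use psi_bdd[OF k] psi_L2[OF k] psi_orth[OF k k] in auto)
  ultimately show "\<exists>A. \<forall>k\<ge>1. \<forall>x\<ge>0. \<bar>psi k x\<bar> \<le> A * exp (eps * lam k)"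
    using A by blast
qed

end
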